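(* Suppose that for an agent $m$ and iteration $k$, $$ \mathbb{E}_{\sigma_k}\Big((\theta_{k+1}^m-\theta_k^m)^\top\phi-\beta_k^{-1}\hat Q^{1:m}_{\boldsymbol{\pi}_{\theta_k}}\Big)^2\le(\epsilon_k^m)^2,\qquad \mathbb{E}_{\sigma_k}\Big(\hat Q^{1:m}_{\boldsymbol{\pi}_{\theta_k}}-Q^{1:m}_{\boldsymbol{\pi}_{\theta_k}}\Big)^2\le(\xi_k^m)^2, $$ where all functions are evaluated at $(s,\mathbf{a}^{1:m-1},a^m)$. Let $\pi^m_{k+1}(\cdot|s,\mathbf{a}^{1:m-1})\propto\exp\{\beta_k^{-1}Q^{1:m}_{\boldsymbol{\pi}_{\theta_k}}(s,\mathbf{a}^{1:m-1},\cdot)+\phi^\top(s,\mathbf{a}^{1:m-1},\cdot)\theta_k^m\}$. Then $$ \Big|\mathbb{E}_{s\sim\nu_*,\ \mathbf{a}^{1:m-1}\sim\boldsymbol{\pi}_*^{1:m-1}}\Big\langle\log\frac{\pi_{\theta_{k+1}^m}(\cdot|s,\mathbf{a}^{1:m-1})}{\pi^m_{k+1}(\cdot|s,\mathbf{a}^{1:m-1})},\ \pi_*^m(\cdot|s,\mathbf{a}^{1:m-1})-\pi_{\theta_k^m}(\cdot|s,\mathbf{a}^{1:m-1})\Big\rangle\Big|\le\Delta_k^m, $$ where $\Delta_k^m=\sqrt2(\phi_k^m+\phi_k^{m-1})\big(\epsilon_k^m+\frac{\xi_k^m}{\beta_k}\big)$.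
   Context: Fully cooperative Markov game with agents $\{1,\dots,N\}$, finite state space $\mathcal{S}$, finite individual action space $\mathcal{A}$. Joint policies in sequential conditional form $\boldsymbol{\pi}(\mathbf{a}|s)=\prod_m\pi^m(a^m|s,\mathbf{a}^{1:m-1})$; $\boldsymbol{\pi}^{1:m}$ is the induced law of $\mathbf{a}^{1:m}$; $Q^{1:m}_{\boldsymbol{\pi}}$ is the expected joint action-value given $\mathbf{a}^{1:m}$ when the other agents follow $\boldsymbol{\pi}$. Log-linear policies $\pi_{\theta^m}(a^m|s,\mathbf{a}^{1:m-1})\propto\exp(\phi^\top(s,\mathbf{a}^{1:m-1},a^m)\theta^m)$, $\|\phi\|_2\le1$. $\boldsymbol{\pi}_{\theta_k}$ is the current joint policy with parameters $\theta_k^1,\dots,\theta_k^N$, $\nu_k$ its stationary state distribution, $\sigma_k$ the law of $(s,\mathbf{a}^{1:m-1},a^m)$ with $s\sim\nu_k$, $\mathbf{a}^{1:m}\sim\boldsymbol{\pi}_{\theta_k}^{1:m}(\cdot|s)$. $\boldsymbol{\pi}_*$ is an optimal joint policy with stationary state distribution $\nu_*$. $\theta^m_{k+1}\in\mathbb{R}^d$, $\beta_k>0$, $\hat Q^{1:m}_{\boldsymbol{\pi}_{\theta_k}}$ is an estimator. $\langle\cdot,\cdot\rangle$ is the inner product over $\mathcal{A}$. Concentrability: $\phi_k^m=\big\|\frac{d(\nu_*\boldsymbol{\pi}_*^{1:m})}{d(\nu_k\boldsymbol{\pi}_{\theta_k}^{1:m})}\big\|_{2,\sigma_k}$ for $m\ge0$,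 with $\|f\|_{2,\rho}=(\sum\rho|f|^2)^{1/2}$. *)

theory Defs
  imports "HOL-Analysis.Analysis"
begin

text \<open>
Agents are indexed 1..N. A joint policy in sequential conditional form is
a function pol with pol j s pre a = pi^j(a | s, a^{1:j-1}) where pre = a^{1:j-1} is a list
of length j-1. Joint actions are lists of length N.
\<close>

definition lists_len :: "nat \<Rightarrow> 'a list set" where
  "lists_len n = {xs. length xs = n}"

definition jprob :: "(nat \<Rightarrow> 's \<Rightarrow> 'a list \<Rightarrow> 'a \<Rightarrow> real) \<Rightarrow> 's \<Rightarrow> 'a list \<Rightarrow> real" where
  "jprob pol s as = (\<Prod>j<length as. pol (Suc j) s (take j as) (as ! j))"

definition cond_prob :: "(nat \<Rightarrow> 's \<Rightarrow> 'a list \<Rightarrow> 'a \<Rightarrow> real) \<Rightarrow> 's \<Rightarrow> 'a list \<Rightarrow> 'a list \<Rightarrow> real" where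
  "cond_prob pol s pre rest =
     (\<Prod>j<length rest. pol (length pre + j + 1) s (pre @ take j rest) (rest ! j))"

definition is_policy :: "nat \<Rightarrow> (nat \<Rightarrow> 's \<Rightarrow> 'a::finite list \<Rightarrow> 'a \<Rightarrow> real) \<Rightarrow> bool" where
  "is_policy N pol \<longleftrightarrow>
     (\<forall>j\<in>{1..N}. \<forall>s pre. length pre = j - 1 \<longrightarrow>
        (\<forall>a. 0 \<le> pol j s pre a) \<and> (\<Sum>a\<in>UNIV. pol j s pre a) = 1)"

definition loglin :: "('s \<Rightarrow> 'a::finite list \<Rightarrow> 'a \<Rightarrow> real ^ 'd) \<Rightarrow> real ^ 'd \<Rightarrow> 's \<Rightarrow> 'a list \<Rightarrow> 'a \<Rightarrow> real" where
  "loglin feat th s pre a =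
     exp (feat s pre a \<bullet> th) / (\<Sum>b\<in>UNIV. exp (feat s pre b \<bullet> th))"

definition step_op :: "nat \<Rightarrow> ('s::finite \<Rightarrow> 'a::finite list \<Rightarrow> 's \<Rightarrow> real)
    \<Rightarrow> (nat \<Rightarrow> 's \<Rightarrow> 'a list \<Rightarrow> 'a \<Rightarrow> real) \<Rightarrow> ('s \<Rightarrow> real) \<Rightarrow> 's \<Rightarrow> real" where
  "step_op N P pol f s = (\<Sum>as\<in>lists_len N. jprob pol s as * (\<Sum>s'\<in>UNIV. P s as s' * f s'))"

definition rew_pol :: "nat \<Rightarrow> ('s \<Rightarrow> 'a::finite list \<Rightarrow> real)
    \<Rightarrow> (nat \<Rightarrow> 's \<Rightarrow> 'a list \<Rightarrow> 'a \<Rightarrow> real) \<Rightarrow> 's \<Rightarrow> real" where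
  "rew_pol N r pol s = (\<Sum>as\<in>lists_len N. jprob pol s as * r s as)"

definition Vf :: "nat \<Rightarrow> ('s::finite \<Rightarrow> 'a::finite list \<Rightarrow> 's \<Rightarrow> real) \<Rightarrow> ('s \<Rightarrow> 'a list \<Rightarrow> real)
    \<Rightarrow> real \<Rightarrow> (nat \<Rightarrow> 's \<Rightarrow> 'a list \<Rightarrow> 'a \<Rightarrow> real) \<Rightarrow> 's \<Rightarrow> real" where
  "Vf N P r gam pol s = (\<Sum>t. gam ^ t * ((step_op N P pol ^^ t) (rew_pol N r pol) s))"

definition Qf :: "nat \<Rightarrow> ('s::finite \<Rightarrow> 'a::finite list \<Rightarrow> 's \<Rightarrow> real) \<Rightarrow> ('s \<Rightarrow> 'a list \<Rightarrow> real)
    \<Rightarrow> real \<Rightarrow> (nat \<Rightarrow> 's \<Rightarrow> 'a list \<Rightarrow> 'a \<Rightarrow> real) \<Rightarrow> 's \<Rightarrow> 'a list \<Rightarrow> real" where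
  "Qf N P r gam pol s as = r s as + gam * (\<Sum>s'\<in>UNIV. P s as s' * Vf N P r gam pol s')"

definition Q1m :: "nat \<Rightarrow> ('s::finite \<Rightarrow> 'a::finite list \<Rightarrow> 's \<Rightarrow> real) \<Rightarrow> ('s \<Rightarrow> 'a list \<Rightarrow> real)
    \<Rightarrow> real \<Rightarrow> (nat \<Rightarrow> 's \<Rightarrow> 'a list \<Rightarrow> 'a \<Rightarrow> real) \<Rightarrow> 's \<Rightarrow> 'a list \<Rightarrow> real" where
  "Q1m N P r gam pol s am =
     (\<Sum>rest\<in>lists_len (N - length am). cond_prob pol s am rest * Qf N P r gam pol s (am @ rest))"

definition is_stationary :: "nat \<Rightarrow> ('s::finite \<Rightarrow> 'a::finite list \<Rightarrow> 's \<Rightarrow> real)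
    \<Rightarrow> (nat \<Rightarrow> 's \<Rightarrow> 'a list \<Rightarrow> 'a \<Rightarrow> real) \<Rightarrow> ('s \<Rightarrow> real) \<Rightarrow> bool" where
  "is_stationary N P pol \<nu> \<longleftrightarrow> (\<forall>s. 0 \<le> \<nu> s) \<and> (\<Sum>s\<in>UNIV. \<nu> s) = 1 \<and>
     (\<forall>s'. \<nu> s' = (\<Sum>s\<in>UNIV. \<nu> s * (\<Sum>as\<in>lists_len N. jprob pol s as * P s as s')))"

definition is_optimal :: "nat \<Rightarrow> ('s::finite \<Rightarrow> 'a::finite list \<Rightarrow> 's \<Rightarrow> real) \<Rightarrow> ('s \<Rightarrow> 'a list \<Rightarrow> real)
    \<Rightarrow> real \<Rightarrow> (nat \<Rightarrow> 's \<Rightarrow> 'a list \<Rightarrow> 'a \<Rightarrow> real) \<Rightarrow> bool" where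
  "is_optimal N P r gam pol \<longleftrightarrow> is_policy N pol \<and>
     (\<forall>pol'. is_policy N pol' \<longrightarrow> (\<forall>s. Vf N P r gam pol' s \<le> Vf N P r gam pol s))"

text \<open>Concentrability coefficient phi^j_k for j \<le> m: the L2(sigma_k)-norm of the density
  d(nu_* pi_*^{1:j}) / d(nu_k pi_k^{1:j}), where sigma_k is the law of (s, a^{1:m}) under
  nu_k and pi_k. Under absolute continuity (assumed in the theorem) the density is the ratio
  below on the support of sigma_k (points outside the support do not contribute).\<close>
definition conc :: "nat \<Rightarrow> nat \<Rightarrow> ('s::finite \<Rightarrow> real) \<Rightarrow> (nat \<Rightarrow> 's \<Rightarrow> 'a::finite list \<Rightarrow> 'a \<Rightarrow> real)
    \<Rightarrow> ('s \<Rightarrow> real) \<Rightarrow> (nat \<Rightarrow> 's \<Rightarrow> 'a list \<Rightarrow> 'a \<Rightarrow> real) \<Rightarrow> real" where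
  "conc m j \<nu>k polk \<nu>s pols =
     sqrt (\<Sum>s\<in>UNIV. \<Sum>as\<in>lists_len m. \<nu>k s * jprob polk s as *
        ((\<nu>s s * jprob pols s (take j as)) / (\<nu>k s * jprob polk s (take j as)))\<^sup>2)"

end

theory Submission
  imports Defs
begin

text \<open>
  Both policies are softmax policies, so the log of their ratio is the residual
  (\<theta>_{k+1} - \<theta>_k)^T \<phi> - Q/\<beta> up to an action-independent normalising constant, which
  disappears when paired with a difference of two distributions. The weight
  \<nu>_* \<pi>_*^{1:m-1} (\<pi>_*^m - \<pi>_k^m) is \<sigma>_k times the difference of the density ratios of
  \<nu>_* \<pi>_* against \<nu>_k \<pi>_k at levels m and m - 1, so Cauchy-Schwarz in L^2(\<sigma>_k) bounds the
  pairing by (\<phi>_k^m + \<phi>_k^{m-1}) times the L^2(\<sigma>_k)-norm of the residual. The residual is the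
  regression error plus 1/\<beta> times the estimation error of Q, and (x + y)^2 \<le> 2 x^2 + 2 y^2
  bounds its norm by \<surd>2 (\<epsilon> + \<xi>/\<beta>).
\<close>

lemma weighted_Cauchy_Schwarz:
  fixes w x y :: "'i \<Rightarrow> real"
  assumes "\<And>i. i \<in> I \<Longrightarrow> 0 \<le> w i"
  shows "\<bar>\<Sum>i\<in>I. w i * x i * y i\<bar> \<le> sqrt (\<Sum>i\<in>I. w i * (x i)\<^sup>2) * sqrt (\<Sum>i\<in>I. w i * (y i)\<^sup>2)"
proof -
  have "(\<Sum>i\<in>I. w i * x i * y i)\<^sup>2 = (\<Sum>i\<in>I. (sqrt (w i) * x i) * (sqrt (w i) * y i))\<^sup>2"
    using assms by (simp add: real_sqrt_mult_self algebra_simps cong: sum.cong)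
  also have "\<dots> \<le> (\<Sum>i\<in>I. (sqrt (w i) * x i)\<^sup>2) * (\<Sum>i\<in>I. (sqrt (w i) * y i)\<^sup>2)"
    by (rule Cauchy_Schwarz_ineq_sum)
  also have "\<dots> = (\<Sum>i\<in>I. w i * (x i)\<^sup>2) * (\<Sum>i\<in>I. w i * (y i)\<^sup>2)"
    using assms by (simp add: power_mult_distrib cong: sum.cong)
  finally show ?thesis
    by (metis real_sqrt_abs real_sqrt_le_mono real_sqrt_mult)
qed

lemma weighted_Cauchy_Schwarz_diff:
  fixes w x y z :: "'i \<Rightarrow> real"
  assumes "\<And>i. i \<in> I \<Longrightarrow> 0 \<le> w i"
  shows "\<bar>\<Sum>i\<in>I. w i * (x i - y i) * z i\<bar>
    \<le> (sqrt (\<Sum>i\<in>I. w i * (x i)\<^sup>2) + sqrt (\<Sum>i\<in>I. w i * (y i)\<^sup>2)) * sqrt (\<Sum>i\<in>I. w i * (z i)\<^sup>2)"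
proof -
  have "(\<Sum>i\<in>I. w i * (x i - y i) * z i) = (\<Sum>i\<in>I. w i * x i * z i) - (\<Sum>i\<in>I. w i * y i * z i)"
    by (simp add: algebra_simps sum_subtractf)
  then have "\<bar>\<Sum>i\<in>I. w i * (x i - y i) * z i\<bar> \<le> \<bar>\<Sum>i\<in>I. w i * x i * z i\<bar> + \<bar>\<Sum>i\<in>I. w i * y i * z i\<bar>"
    by linarith
  then show ?thesis
    using weighted_Cauchy_Schwarz[of I w x z, OF assms] weighted_Cauchy_Schwarz[of I w y z, OF assms]
    by (simp add: distrib_right)
qed

lemma sqrt_weighted_sum_square_add_le:
  fixes w x y :: "'i \<Rightarrow> real"
  assumes "\<And>i. i \<in> I \<Longrightarrow> 0 \<le> w i" and "0 \<le> a" "0 \<le> b"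
    and "(\<Sum>i\<in>I. w i * (x i)\<^sup>2) \<le> a\<^sup>2" "(\<Sum>i\<in>I. w i * (y i)\<^sup>2) \<le> b\<^sup>2"
  shows "sqrt (\<Sum>i\<in>I. w i * (x i + y i)\<^sup>2) \<le> sqrt 2 * (a + b)"
proof -
  have "(\<Sum>i\<in>I. w i * (x i + y i)\<^sup>2) \<le> (\<Sum>i\<in>I. 2 * (w i * (x i)\<^sup>2) + 2 * (w i * (y i)\<^sup>2))"
  proof (intro sum_mono)
    fix i assume "i \<in> I"
    have "(x i + y i)\<^sup>2 \<le> 2 * (x i)\<^sup>2 + 2 * (y i)\<^sup>2"
      using zero_le_power2[of "x i - y i"] by (simp add: power2_eq_square algebra_simps)
    from mult_left_mono[OF this assms(1)[OF \<open>i \<in> I\<close>]]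
    show "w i * (x i + y i)\<^sup>2 \<le> 2 * (w i * (x i)\<^sup>2) + 2 * (w i * (y i)\<^sup>2)"
      by (simp add: algebra_simps)
  qed
  also have "\<dots> \<le> 2 * a\<^sup>2 + 2 * b\<^sup>2"
    using assms(4,5) by (simp add: sum.distrib flip: sum_distrib_left)
  also have "\<dots> \<le> (sqrt 2 * (a + b))\<^sup>2"
    using assms(2,3) by (simp add: power_mult_distrib power2_eq_square algebra_simps)
  finally show ?thesis
    using assms(2,3) by (simp add: real_le_lsqrt)
qed

lemma sum_sum_sum_eq_sum_product:
  "(\<Sum>x\<in>A. \<Sum>y\<in>B. \<Sum>z\<in>C. f x y z) = (\<Sum>(x, y, z)\<in>A \<times> B \<times> C. f x y z)"
  by (simp add: sum.cartesian_product)

lemma sqrt_nested_sum_square_add_divide_le: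
  fixes w f g :: "'x \<Rightarrow> 'y \<Rightarrow> 'z \<Rightarrow> real"
  assumes "\<And>x y z. 0 \<le> w x y z" and "0 < c" "0 \<le> a" "0 \<le> b"
    and "(\<Sum>x\<in>A. \<Sum>y\<in>B. \<Sum>z\<in>C. w x y z * (f x y z)\<^sup>2) \<le> a\<^sup>2"
    and "(\<Sum>x\<in>A. \<Sum>y\<in>B. \<Sum>z\<in>C. w x y z * (g x y z)\<^sup>2) \<le> b\<^sup>2"
  shows "sqrt (\<Sum>x\<in>A. \<Sum>y\<in>B. \<Sum>z\<in>C. w x y z * (f x y z + g x y z / c)\<^sup>2) \<le> sqrt 2 * (a + b / c)"
proof -
  have "(\<Sum>x\<in>A. \<Sum>y\<in>B. \<Sum>z\<in>C. w x y z * (g x y z / c)\<^sup>2) \<le> (b / c)\<^sup>2"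
    using divide_right_mono[OF assms(6), of "c\<^sup>2"] by (simp add: power_divide sum_divide_distrib)
  then show ?thesis
    using sqrt_weighted_sum_square_add_le[of "A \<times> B \<times> C" "\<lambda>(x, y, z). w x y z" a "b / c"
        "\<lambda>(x, y, z). f x y z" "\<lambda>(x, y, z). g x y z / c"] assms
    by (simp add: sum_sum_sum_eq_sum_product case_prod_unfold)
qed

definition softmax :: "('a::finite \<Rightarrow> real) \<Rightarrow> 'a \<Rightarrow> real" where
  "softmax f a = exp (f a) / (\<Sum>b\<in>UNIV. exp (f b))"

lemma softmax_pos: "0 < softmax f a"
  unfolding softmax_def by (intro divide_pos_pos sum_pos) auto

lemma sum_softmax: "(\<Sum>a\<in>UNIV. softmax f a) = 1"
proof -
  have "(\<Sum>b\<in>UNIV. exp (f b)) \<noteq> 0"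
    by (metis exp_gt_zero finite UNIV_not_empty sum_pos less_irrefl)
  then show ?thesis
    by (simp add: softmax_def flip: sum_divide_distrib)
qed

lemma ln_softmax_divide:
  "ln (softmax f a / softmax g a) = f a - g a - (ln (\<Sum>b\<in>UNIV. exp (f b)) - ln (\<Sum>b\<in>UNIV. exp (g b)))"
proof -
  have "0 < (\<Sum>b\<in>UNIV. exp (f b))" "0 < (\<Sum>b\<in>UNIV. exp (g b))"
    by (auto intro: sum_pos)
  then show ?thesis
    by (simp add: softmax_def ln_div ln_mult)
qed

lemma sum_ln_softmax_divide_mult_diff:
  assumes "(\<Sum>a\<in>UNIV. p a) = (\<Sum>a\<in>UNIV. q a)"
  shows "(\<Sum>a\<in>UNIV. ln (softmax f a / softmax g a) * (p a - q a)) = (\<Sum>a\<in>UNIV. (f a - g a) * (p a - q a))"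
  using assms by (simp add: ln_softmax_divide left_diff_distrib sum_subtractf flip: sum_distrib_left)

lemma loglin_eq_softmax: "loglin feat th s pre = softmax (\<lambda>a. feat s pre a \<bullet> th)"
  by (simp add: fun_eq_iff loglin_def softmax_def)

lemma sum_ln_loglin_divide_softmax_mult_diff:
  assumes "(\<Sum>a\<in>UNIV. p a) = 1"
  shows "(\<Sum>a\<in>UNIV. ln (loglin feat \<theta>' s pre a / softmax (\<lambda>a. g a + feat s pre a \<bullet> \<theta>) a) *
            (p a - loglin feat \<theta> s pre a))
       = (\<Sum>a\<in>UNIV. ((\<theta>' - \<theta>) \<bullet> feat s pre a - g a) * (p a - loglin feat \<theta> s pre a))"
proof -
  have "(\<Sum>a\<in>UNIV. p a) = (\<Sum>a\<in>UNIV. loglin feat \<theta> s pre a)"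
    using assms by (simp add: loglin_eq_softmax sum_softmax)
  then have "(\<Sum>a\<in>UNIV. ln (loglin feat \<theta>' s pre a / softmax (\<lambda>a. g a + feat s pre a \<bullet> \<theta>) a) *
            (p a - loglin feat \<theta> s pre a))
       = (\<Sum>a\<in>UNIV. (feat s pre a \<bullet> \<theta>' - (g a + feat s pre a \<bullet> \<theta>)) * (p a - loglin feat \<theta> s pre a))"
    by (simp only: loglin_eq_softmax[of feat \<theta>'] sum_ln_softmax_divide_mult_diff)
  then show ?thesis
    by (simp add: inner_diff_left inner_commute diff_diff_eq add.commute)
qed

lemma finite_lists_len [simp]: "finite (lists_len n :: 'a::finite list set)"
  using finite_lists_length_eq[of "UNIV :: 'a set" n] by (simp add: lists_len_def)

lemma sum_lists_len_Suc:
  "(\<Sum>as\<in>lists_len (Suc n). g as) = (\<Sum>pre\<in>lists_len n. \<Sum>a\<in>(UNIV :: 'a::finite set). g (pre @ [a]))"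
proof -
  have image: "lists_len (Suc n) = (\<lambda>(pre, a). pre @ [a]) ` (lists_len n \<times> UNIV)"
    by (auto simp: lists_len_def length_Suc_conv_rev)
  have "inj_on (\<lambda>(pre, a :: 'a). pre @ [a]) (lists_len n \<times> UNIV)"
    by (auto simp: inj_on_def)
  then show ?thesis
    unfolding image by (simp add: sum.reindex sum.cartesian_product case_prod_unfold)
qed

lemma jprob_snoc: "jprob pol s (pre @ [a]) = jprob pol s pre * pol (Suc (length pre)) s pre a"
  unfolding jprob_def by (simp add: nth_append)

lemma jprob_pos: "(\<And>j s pre a. 0 < pol j s pre a) \<Longrightarrow> 0 < jprob pol s as"
  unfolding jprob_def by (intro prod_pos) auto

lemma conc_Suc_eq:
  "conc (Suc n) j \<nu> pol \<nu>' pol' =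
     sqrt (\<Sum>s\<in>UNIV. \<Sum>pre\<in>lists_len n. \<Sum>a\<in>UNIV. \<nu> s * jprob pol s (pre @ [a]) *
        (\<nu>' s * jprob pol' s (take j (pre @ [a])) / (\<nu> s * jprob pol s (take j (pre @ [a]))))\<^sup>2)"
  unfolding conc_def by (simp add: sum_lists_len_Suc)

lemma conc_nonneg:
  assumes "\<forall>s. 0 \<le> \<nu> s" and "\<forall>j s pre a. 0 \<le> pol j s pre a"
  shows "0 \<le> conc m j \<nu> pol \<nu>' pol'"
  using assms unfolding conc_def jprob_def
  by (intro real_sqrt_ge_zero sum_nonneg mult_nonneg_nonneg prod_nonneg) auto

lemma change_of_measure_bound:
  fixes \<nu> \<nu>' :: "'s::finite \<Rightarrow> real" and pol pol' :: "nat \<Rightarrow> 's \<Rightarrow> 'a::finite list \<Rightarrow> 'a \<Rightarrow> real"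
  assumes \<nu>: "\<forall>s. 0 \<le> \<nu> s" and abs_cont: "\<forall>s. \<nu> s = 0 \<longrightarrow> \<nu>' s = 0"
    and pol: "\<forall>j s pre a. 0 < pol j s pre a"
  shows "\<bar>\<Sum>s\<in>UNIV. \<Sum>pre\<in>lists_len n. \<nu>' s * jprob pol' s pre *
            (\<Sum>a\<in>UNIV. u s pre a * (pol' (Suc n) s pre a - pol (Suc n) s pre a))\<bar>
    \<le> (conc (Suc n) (Suc n) \<nu> pol \<nu>' pol' + conc (Suc n) n \<nu> pol \<nu>' pol') *
       sqrt (\<Sum>s\<in>UNIV. \<Sum>pre\<in>lists_len n. \<Sum>a\<in>UNIV. \<nu> s * jprob pol s (pre @ [a]) * (u s pre a)\<^sup>2)"
proof -
  define \<sigma> where "\<sigma> s pre a = \<nu> s * jprob pol s (pre @ [a])" for s pre a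
  define ratio where "ratio j s pre a =
    \<nu>' s * jprob pol' s (take j (pre @ [a])) / (\<nu> s * jprob pol s (take j (pre @ [a])))" for j s pre a
  have density: "\<nu>' s * jprob pol' s pre * (pol' (Suc n) s pre a - pol (Suc n) s pre a)
      = \<sigma> s pre a * (ratio (Suc n) s pre a - ratio n s pre a)" if "pre \<in> lists_len n" for s pre a
  proof (cases "\<nu> s = 0")
    case False
    have "0 < jprob pol s pre" "0 < pol (Suc n) s pre a"
      using pol jprob_pos[of pol] by auto
    with False \<open>pre \<in> lists_len n\<close> show ?thesis
      by (simp add: \<sigma>_def ratio_def jprob_snoc lists_len_def field_simps)
    \<comment> \<open>where \<nu> s = 0 the ratios are 0 (x / 0 = 0), and absolute continuity kills the left side\<close>
  qed (simp add: abs_cont \<sigma>_def)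
  have "(\<Sum>s\<in>UNIV. \<Sum>pre\<in>lists_len n. \<nu>' s * jprob pol' s pre *
            (\<Sum>a\<in>UNIV. u s pre a * (pol' (Suc n) s pre a - pol (Suc n) s pre a)))
      = (\<Sum>s\<in>UNIV. \<Sum>pre\<in>lists_len n. \<Sum>a\<in>UNIV. \<sigma> s pre a * (ratio (Suc n) s pre a - ratio n s pre a) * u s pre a)"
  proof (intro sum.cong refl)
    fix s and pre :: "'a list" assume "pre \<in> lists_len n"
    show "\<nu>' s * jprob pol' s pre * (\<Sum>a\<in>UNIV. u s pre a * (pol' (Suc n) s pre a - pol (Suc n) s pre a))
        = (\<Sum>a\<in>UNIV. \<sigma> s pre a * (ratio (Suc n) s pre a - ratio n s pre a) * u s pre a)"
      unfolding sum_distrib_left density[OF \<open>pre \<in> lists_len n\<close>, symmetric]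
      by (simp add: mult_ac)
  qed
  moreover have "0 \<le> \<sigma> s pre a" for s pre a
    using \<nu> jprob_pos[of pol] pol by (simp add: \<sigma>_def less_imp_le)
  ultimately show ?thesis
    using weighted_Cauchy_Schwarz_diff[of "UNIV \<times> lists_len n \<times> UNIV" "\<lambda>(s, pre, a). \<sigma> s pre a"
        "\<lambda>(s, pre, a). ratio (Suc n) s pre a" "\<lambda>(s, pre, a). ratio n s pre a" "\<lambda>(s, pre, a). u s pre a"]
    by (simp add: conc_Suc_eq \<sigma>_def ratio_def sum_sum_sum_eq_sum_product case_prod_unfold)
qed

theorem lemma6:
  fixes N m :: nat
    and P :: "'s::finite \<Rightarrow> 'a::finite list \<Rightarrow> 's \<Rightarrow> real"
    and r :: "'s \<Rightarrow> 'a list \<Rightarrow> real"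
    and gam :: real
    and feat :: "'s \<Rightarrow> 'a list \<Rightarrow> 'a \<Rightarrow> real ^ 'd"
    and \<theta>k :: "nat \<Rightarrow> real ^ 'd"
    and \<theta>next :: "real ^ 'd"
    and \<nu>k \<nu>s :: "'s \<Rightarrow> real"
    and pols :: "nat \<Rightarrow> 's \<Rightarrow> 'a list \<Rightarrow> 'a \<Rightarrow> real"
    and \<beta> \<epsilon> \<xi> :: real
    and Qhat :: "'s \<Rightarrow> 'a list \<Rightarrow> 'a \<Rightarrow> real"
  defines "polk \<equiv> (\<lambda>j. loglin feat (\<theta>k j))"
  defines "Q \<equiv> (\<lambda>s pre a. Q1m N P r gam polk s (pre @ [a]))"
  defines "\<sigma>k \<equiv> (\<lambda>s pre a. \<nu>k s * jprob polk s (pre @ [a]))"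
  defines "pinext \<equiv> (\<lambda>s pre a. exp (Q s pre a / \<beta> + feat s pre a \<bullet> \<theta>k m)
                          / (\<Sum>b\<in>UNIV. exp (Q s pre b / \<beta> + feat s pre b \<bullet> \<theta>k m)))"
  assumes N: "1 \<le> N" and m: "m \<in> {1..N}"
    and gam: "0 \<le> gam" "gam < 1"
    and P: "\<forall>s as. length as = N \<longrightarrow> (\<forall>s'. 0 \<le> P s as s') \<and> (\<Sum>s'\<in>UNIV. P s as s') = 1"
    and feat: "\<forall>s pre a. norm (feat s pre a) \<le> 1"
    and stat_k: "is_stationary N P polk \<nu>k"
    and opt: "is_optimal N P r gam pols"
    and stat_s: "is_stationary N P pols \<nu>s"
    and abs_cont: "\<forall>s. \<nu>k s = 0 \<longrightarrow> \<nu>s s = 0"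
    and \<beta>: "0 < \<beta>"
    and \<epsilon>: "0 \<le> \<epsilon>" and \<xi>: "0 \<le> \<xi>"
    and err1: "(\<Sum>s\<in>UNIV. \<Sum>pre\<in>lists_len (m - 1). \<Sum>a\<in>UNIV. \<sigma>k s pre a *
                 ((\<theta>next - \<theta>k m) \<bullet> feat s pre a - Qhat s pre a / \<beta>)\<^sup>2) \<le> \<epsilon>\<^sup>2"
    and err2: "(\<Sum>s\<in>UNIV. \<Sum>pre\<in>lists_len (m - 1). \<Sum>a\<in>UNIV. \<sigma>k s pre a *
                 (Qhat s pre a - Q s pre a)\<^sup>2) \<le> \<xi>\<^sup>2"
  shows "\<bar>\<Sum>s\<in>UNIV. \<Sum>pre\<in>lists_len (m - 1). \<nu>s s * jprob pols s pre *
            (\<Sum>a\<in>UNIV. ln (loglin feat \<theta>next s pre a / pinext s pre a) *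
                        (pols m s pre a - loglin feat (\<theta>k m) s pre a))\<bar>
         \<le> sqrt 2 * (conc m m \<nu>k polk \<nu>s pols + conc m (m - 1) \<nu>k polk \<nu>s pols) * (\<epsilon> + \<xi> / \<beta>)"
proof -
  have m_Suc: "Suc (m - 1) = m" using m by simp
  have polk_pos: "\<forall>j s pre a. 0 < polk j s pre a"
    by (simp add: polk_def loglin_eq_softmax softmax_pos)
  have \<nu>k_nonneg: "\<forall>s. 0 \<le> \<nu>k s" using stat_k unfolding is_stationary_def by blast
  have \<sigma>k_nonneg: "0 \<le> \<sigma>k s pre a" for s pre a
    using \<nu>k_nonneg polk_pos jprob_pos[of polk] by (simp add: \<sigma>k_def less_imp_le)
  define u where "u s pre a = (\<theta>next - \<theta>k m) \<bullet> feat s pre a - Q s pre a / \<beta>" for s pre a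
  have pairing_eq: "(\<Sum>a\<in>UNIV. ln (loglin feat \<theta>next s pre a / pinext s pre a) *
                        (pols m s pre a - loglin feat (\<theta>k m) s pre a))
      = (\<Sum>a\<in>UNIV. u s pre a * (pols m s pre a - polk m s pre a))" if "pre \<in> lists_len (m - 1)" for s pre
  proof -
    have "pinext s pre = softmax (\<lambda>a. Q s pre a / \<beta> + feat s pre a \<bullet> \<theta>k m)"
      by (simp add: fun_eq_iff pinext_def softmax_def)
    moreover have "(\<Sum>a\<in>UNIV. pols m s pre a) = 1"
      using opt m that by (auto simp: is_optimal_def is_policy_def lists_len_def)
    ultimately show ?thesis
      using sum_ln_loglin_divide_softmax_mult_diff[where p = "pols m s pre" and g = "\<lambda>a. Q s pre a / \<beta>"]
      by (simp add: u_def polk_def)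
  qed
  have residual_split: "u s pre a = ((\<theta>next - \<theta>k m) \<bullet> feat s pre a - Qhat s pre a / \<beta>) + (Qhat s pre a - Q s pre a) / \<beta>"
    for s pre a
    by (simp add: u_def diff_divide_distrib)
  from residual_split have residual_bound:
    "sqrt (\<Sum>s\<in>UNIV. \<Sum>pre\<in>lists_len (m - 1). \<Sum>a\<in>UNIV. \<sigma>k s pre a * (u s pre a)\<^sup>2) \<le> sqrt 2 * (\<epsilon> + \<xi> / \<beta>)"
    using sqrt_nested_sum_square_add_divide_le[OF \<sigma>k_nonneg \<beta> \<epsilon> \<xi> err1 err2] by simp
  have "\<bar>\<Sum>s\<in>UNIV. \<Sum>pre\<in>lists_len (m - 1). \<nu>s s * jprob pols s pre *
            (\<Sum>a\<in>UNIV. ln (loglin feat \<theta>next s pre a / pinext s pre a) *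
                        (pols m s pre a - loglin feat (\<theta>k m) s pre a))\<bar>
      \<le> (conc m m \<nu>k polk \<nu>s pols + conc m (m - 1) \<nu>k polk \<nu>s pols) *
         sqrt (\<Sum>s\<in>UNIV. \<Sum>pre\<in>lists_len (m - 1). \<Sum>a\<in>UNIV. \<sigma>k s pre a * (u s pre a)\<^sup>2)"
    using change_of_measure_bound[OF \<nu>k_nonneg abs_cont polk_pos, where n = "m - 1" and u = u, unfolded m_Suc]
    by (simp add: pairing_eq \<sigma>k_def cong: sum.cong)
  also have "\<dots> \<le> (conc m m \<nu>k polk \<nu>s pols + conc m (m - 1) \<nu>k polk \<nu>s pols) * (sqrt 2 * (\<epsilon> + \<xi> / \<beta>))"
    using residual_bound conc_nonneg[of \<nu>k polk] \<nu>k_nonneg polk_pos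
    by (intro mult_left_mono add_nonneg_nonneg) (auto simp: less_imp_le)
  finally show ?thesis
    by (simp add: mult_ac)
qed

end
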